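(* Let $B_n=\{2\}\cup\{j \text{ odd}: 3\le j\le n-2\}$. There is a constant $C>0$ such that $|D_X(B_n)|\ge C\left(\sqrt{2+2\sqrt2}\right)^n$ for all sufficiently large $n$.
   Context: For $A\subseteq[n]$, $D_X(A)$ is the set of all linear orders $q$ on $[n]$ such that for every triple $i<j<k$ in $[n]$: if $j\in A$ then $i$ is not ranked last among $\{i,j,k\}$ in $q$, and if $j\notin A$ then $k$ is not ranked first among $\{i,j,k\}$ in $q$. ($B_n$ equals $\{2,3,5,\dots,n-3+(n\bmod 2)\}$, the "odd $1N33N1$-alternating scheme".) *)

theory Defs
  imports Complex_Main
begin

text \<open>A linear order q on [n] = {1..n} is a relation with linear_order_on {1..n} q;
  a pair (a,b) in q means that a is ranked at or before b (a comes no later than b).\<close>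

definition ranked_last :: "(nat \<times> nat) set \<Rightarrow> nat \<Rightarrow> nat \<Rightarrow> nat \<Rightarrow> bool" where
  "ranked_last q x y z \<longleftrightarrow> (y, x) \<in> q \<and> (z, x) \<in> q"

definition ranked_first :: "(nat \<times> nat) set \<Rightarrow> nat \<Rightarrow> nat \<Rightarrow> nat \<Rightarrow> bool" where
  "ranked_first q x y z \<longleftrightarrow> (x, y) \<in> q \<and> (x, z) \<in> q"

definition D_X :: "nat \<Rightarrow> nat set \<Rightarrow> (nat \<times> nat) set set" where
  "D_X n A = {q. linear_order_on {1..n} q \<and>
     (\<forall>i j k. 1 \<le> i \<and> i < j \<and> j < k \<and> k \<le> n \<longrightarrow>
        (j \<in> A \<longrightarrow> \<not> ranked_last q i j k) \<and>
        (j \<notin> A \<longrightarrow> \<not> ranked_first q k i j))}"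

definition B :: "nat \<Rightarrow> nat set" where
  "B n = {2} \<union> {j. odd j \<and> 3 \<le> j \<and> j + 2 \<le> n}"

end

theory Submission
  imports Defs
begin

(*
  Orders are built by inserting 2, 3, ..., n one at a time, each new element k being placed
  with some number c of the earlier elements ranked above it.  A state f, updated after every
  insertion, bounds the admissible c so that no forbidden triple ever arises; admissible
  sequences of length n - 2, with n finally put on top, therefore inject into D_X(B_n).

  Two consecutive insertion steps act on functions of the state by a transfer operator with
  Perron eigenvalue mu = 2 + 2 sqrt 2.  The weight sqrt 2 ^ (f + 1) - 1 is an exact
  eigenfunction, so the weighted number of sequences grows exactly like mu ^ (m / 2), while
  rho ^ f, rho = 1 - sqrt 2 / 2, is a sub-eigenvector of the adjoint, which bounds the number
  of sequences in state f by C mu ^ (m / 2) rho ^ f.  Since sqrt 2 * rho < 1, the states above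
  a suitable threshold carry at most half of the weight, and below it the weights are bounded;
  hence the number of sequences itself is at least c mu ^ (m / 2).
*)

section \<open>Orders given by rank functions\<close>

definition rank_avoids :: "nat set \<Rightarrow> nat \<Rightarrow> (nat \<Rightarrow> nat) \<Rightarrow> bool" where
  "rank_avoids A n r \<longleftrightarrow> (\<forall>i j k. 1 \<le> i \<longrightarrow> i < j \<longrightarrow> j < k \<longrightarrow> k \<le> n \<longrightarrow>
     (j \<in> A \<longrightarrow> \<not> (r j < r i \<and> r k < r i)) \<and> (j \<notin> A \<longrightarrow> \<not> (r k < r i \<and> r k < r j)))"

lemma rank_avoidsD:
  "rank_avoids A n r \<Longrightarrow> 1 \<le> i \<Longrightarrow> i < j \<Longrightarrow> j < k \<Longrightarrow> k \<le> n \<Longrightarrow>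
    (j \<in> A \<longrightarrow> \<not> (r j < r i \<and> r k < r i)) \<and> (j \<notin> A \<longrightarrow> \<not> (r k < r i \<and> r k < r j))"
  unfolding rank_avoids_def by blast

definition order_of_rank :: "nat \<Rightarrow> (nat \<Rightarrow> nat) \<Rightarrow> (nat \<times> nat) set" where
  "order_of_rank n r = {(x, y). x \<in> {1..n} \<and> y \<in> {1..n} \<and> r x \<le> r y}"

lemma linear_order_on_order_of_rank:
  assumes "inj_on r {1..n}"
  shows "linear_order_on {1..n} (order_of_rank n r)"
proof -
  have "x = y" if "x \<in> {1..n}" "y \<in> {1..n}" "r x = r y" for x y
    using inj_onD[OF assms] that by blast
  then show ?thesis
    unfolding linear_order_on_def partial_order_on_def preorder_on_def refl_on_def trans_def
      antisym_def total_on_def order_of_rank_def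
    by auto
qed

lemma order_of_rank_in_D_X:
  assumes inj: "inj_on r {1..n}" and avoids: "rank_avoids A n r"
  shows "order_of_rank n r \<in> D_X n A"
proof -
  have less: "r x < r y" if "(x, y) \<in> order_of_rank n r" "x \<noteq> y" for x y
    using that inj_onD[OF inj, of x y] unfolding order_of_rank_def by force
  show ?thesis
    unfolding D_X_def
  proof (intro CollectI conjI allI impI)
    show "linear_order_on {1..n} (order_of_rank n r)"
      using linear_order_on_order_of_rank[OF inj] .
  next
    fix i j k assume "1 \<le> i \<and> i < j \<and> j < k \<and> k \<le> n" "j \<in> A"
    then show "\<not> ranked_last (order_of_rank n r) i j k"
      using avoids less[of j i] less[of k i] unfolding rank_avoids_def ranked_last_def by auto
  next
    fix i j k assume "1 \<le> i \<and> i < j \<and> j < k \<and> k \<le> n" "j \<notin> A"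
    then show "\<not> ranked_first (order_of_rank n r) k i j"
      using avoids less[of k i] less[of k j] unfolding rank_avoids_def ranked_first_def by auto
  qed
qed

lemma rank_avoids_top:
  assumes avoids: "rank_avoids A n r" and "A' \<subseteq> A" "A \<inter> {..<n - 1} \<subseteq> A'"
    and top: "\<And>x. x \<in> {1..<n} \<Longrightarrow> r x < r n"
  shows "rank_avoids A' n r"
  unfolding rank_avoids_def
proof (intro allI impI)
  fix i j k assume ijk: "1 \<le> i" "i < j" "j < k" "k \<le> n"
  show "(j \<in> A' \<longrightarrow> \<not> (r j < r i \<and> r k < r i)) \<and> (j \<notin> A' \<longrightarrow> \<not> (r k < r i \<and> r k < r j))"
  proof (cases "j \<in> A \<and> j \<notin> A'")
    case True
    then have "k = n" using assms(3) ijk by auto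
    then show ?thesis using True top[of i] ijk by auto
  next
    case False
    then show ?thesis using rank_avoidsD[OF avoids ijk] assms(2) by auto
  qed
qed

lemma finite_D_X: "finite (D_X n A)"
proof (rule finite_subset)
  show "D_X n A \<subseteq> Pow ({1..n} \<times> {1..n})"
    unfolding D_X_def linear_order_on_def partial_order_on_def preorder_on_def refl_on_def
    by auto
qed simp

definition ranking :: "nat \<Rightarrow> (nat \<Rightarrow> nat) \<Rightarrow> bool" where
  "ranking n r \<longleftrightarrow> inj_on r {1..n} \<and> r ` {1..n} \<subseteq> {..<n}"

lemma ranking_less: "ranking n r \<Longrightarrow> x \<in> {1..n} \<Longrightarrow> r x < n"
  unfolding ranking_def by blast

lemma ranking_image:
  assumes "ranking n r"
  shows "r ` {1..n} = {..<n}"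
proof -
  have "inj_on r {1..n}" "r ` {1..n} \<subseteq> {..<n}"
    using assms by (simp_all add: ranking_def)
  then show ?thesis by (intro card_subset_eq) (simp_all add: card_image)
qed

lemma ranking_card_less:
  assumes r: "ranking n r" and x: "x \<in> {1..n}"
  shows "card {y \<in> {1..n}. r y < r x} = r x"
proof -
  have "r x < n" using ranking_image[OF r] x by blast
  have "r ` {y \<in> {1..n}. r y < r x} = {v \<in> r ` {1..n}. v < r x}" by blast
  also have "\<dots> = {..<r x}" using ranking_image[OF r] \<open>r x < n\<close> by auto
  finally have "r ` {y \<in> {1..n}. r y < r x} = {..<r x}" .
  moreover have "inj_on r {y \<in> {1..n}. r y < r x}"
    using r unfolding ranking_def by (auto intro: inj_on_subset)
  ultimately show ?thesis using card_image by fastforce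
qed

lemma ranking_eq_if_order_of_rank_eq:
  assumes r1: "ranking n r1" and r2: "ranking n r2"
    and eq: "order_of_rank n r1 = order_of_rank n r2" and x: "x \<in> {1..n}"
  shows "r1 x = r2 x"
proof -
  have below: "{y \<in> {1..n}. r y < r x} = {y \<in> {1..n}. (x, y) \<notin> order_of_rank n r}" for r
    using x by (auto simp: order_of_rank_def)
  have "r1 x = card {y \<in> {1..n}. (x, y) \<notin> order_of_rank n r1}"
    using ranking_card_less[OF r1 x] below[of r1] by simp
  also have "\<dots> = r2 x"
    using ranking_card_less[OF r2 x] below[of r2] eq by simp
  finally show ?thesis .
qed

section \<open>Building orders by successive insertion\<close>

definition B_inf :: "nat set" where
  "B_inf = insert 2 {j. odd j \<and> 3 \<le> j}"

lemma B_subset_B_inf: "B n \<subseteq> B_inf"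
  by (auto simp: B_def B_inf_def)

lemma B_inf_below_subset_B: "B_inf \<inter> {..<n - 1} \<subseteq> B n"
  by (auto simp: B_def B_inf_def)

definition insert_rank :: "nat \<Rightarrow> nat \<Rightarrow> (nat \<Rightarrow> nat) \<Rightarrow> nat \<Rightarrow> nat" where
  "insert_rank k p r x = (if x = k then p else if p \<le> r x then Suc (r x) else r x)"

lemma insert_rank_less_iff:
  "x \<noteq> k \<Longrightarrow> y \<noteq> k \<Longrightarrow> insert_rank k p r x < insert_rank k p r y \<longleftrightarrow> r x < r y"
  by (auto simp: insert_rank_def)

lemma insert_rank_below: "x \<noteq> k \<Longrightarrow> r x < p \<Longrightarrow> insert_rank k p r x = r x"
  by (simp add: insert_rank_def)

lemma insert_rank_cancel:
  "x \<noteq> k \<Longrightarrow> insert_rank k p r x = insert_rank k p r' x \<Longrightarrow> r x = r' x"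
  by (auto simp: insert_rank_def split: if_splits)

lemma ranking_insert_rank:
  assumes r: "ranking n r" and "p \<le> n"
  shows "ranking (Suc n) (insert_rank (Suc n) p r)"
proof -
  have "inj_on (insert_rank (Suc n) p r) {1..Suc n}"
  proof (rule inj_onI)
    fix x y assume "x \<in> {1..Suc n}" "y \<in> {1..Suc n}"
      and eq: "insert_rank (Suc n) p r x = insert_rank (Suc n) p r y"
    then consider "x = Suc n \<or> y = Suc n" | "x \<in> {1..n}" "y \<in> {1..n}" by fastforce
    then show "x = y"
    proof cases
      case 1
      then show ?thesis using eq by (auto simp: insert_rank_def split: if_splits)
    next
      case 2
      then have "r x = r y" using eq by (auto simp: insert_rank_def split: if_splits)
      then show ?thesis using r 2 by (auto simp: ranking_def dest: inj_onD)
    qed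
  qed
  moreover have "r x < n" if "x \<in> {1..n}" for x
    using ranking_less[OF r that] .
  then have "insert_rank (Suc n) p r ` {1..Suc n} \<subseteq> {..<Suc n}"
    using \<open>p \<le> n\<close> by (auto simp: insert_rank_def le_Suc_eq)
  ultimately show ?thesis by (simp add: ranking_def)
qed

(* The list [c_n, ..., c_3, c_2] (newest first) encodes the order on {1..n} obtained by
   inserting k = 2, ..., n in turn with exactly c_k of the earlier elements ranked above k;
   rank x is the position of x, counted from 0 for the first-ranked element. *)

definition next_state :: "nat \<Rightarrow> nat \<Rightarrow> nat \<Rightarrow> nat" where
  "next_state k f c =
     (if k \<in> B_inf then (if c = 0 then Suc f else 0) else (if c = 0 then 1 else c))"

fun state :: "nat list \<Rightarrow> nat" where
  "state [] = 1"
| "state (c # cs) = next_state (length cs + 2) (state cs) c"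

fun rank :: "nat list \<Rightarrow> nat \<Rightarrow> nat" where
  "rank [] = (\<lambda>x. 0)"
| "rank (c # cs) = insert_rank (length cs + 2) (length cs + 1 - c) (rank cs)"

fun admissible :: "nat list \<Rightarrow> bool" where
  "admissible [] \<longleftrightarrow> True"
| "admissible (c # cs) \<longleftrightarrow> admissible cs \<and> c \<le> state cs"

definition choices :: "nat \<Rightarrow> nat list set" where
  "choices m = {cs. length cs = m \<and> admissible cs}"

lemma next_state_le: "c \<le> f \<Longrightarrow> next_state k f c \<le> Suc f"
  by (simp add: next_state_def)

lemma state_le: "admissible cs \<Longrightarrow> state cs \<le> length cs + 1"
  by (induction cs) (auto intro: order_trans[OF next_state_le])

(* The new element n + 1 may be inserted at any of the top f ranks without creating a
   forbidden triple; the state is chosen to maintain this. *)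

definition insertable :: "nat \<Rightarrow> nat \<Rightarrow> (nat \<Rightarrow> nat) \<Rightarrow> bool" where
  "insertable n f r \<longleftrightarrow> (\<forall>i j. 1 \<le> i \<longrightarrow> i < j \<longrightarrow> j \<le> n \<longrightarrow>
     (j \<in> B_inf \<and> r j < r i \<longrightarrow> r i < n - f) \<and> (j \<notin> B_inf \<longrightarrow> r i < n - f \<or> r j < n - f))"

lemma insertableD:
  "insertable n f r \<Longrightarrow> 1 \<le> i \<Longrightarrow> i < j \<Longrightarrow> j \<le> n \<Longrightarrow>
    (j \<in> B_inf \<and> r j < r i \<longrightarrow> r i < n - f) \<and> (j \<notin> B_inf \<longrightarrow> r i < n - f \<or> r j < n - f)"
  unfolding insertable_def by blast

lemma rank_avoids_insert_rank:
  assumes avoids: "rank_avoids B_inf n r" and ins: "insertable n f r" and "n - f \<le> p"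
  shows "rank_avoids B_inf (Suc n) (insert_rank (Suc n) p r)"
  unfolding rank_avoids_def
proof (intro allI impI)
  fix i j k assume ijk: "1 \<le> i" "i < j" "j < k" "k \<le> Suc n"
  let ?r = "insert_rank (Suc n) p r"
  have old: "?r x = r x" if "x \<le> n" "r x < n - f" for x
    using that \<open>n - f \<le> p\<close> by (simp add: insert_rank_below)
  show "(j \<in> B_inf \<longrightarrow> \<not> (?r j < ?r i \<and> ?r k < ?r i)) \<and>
        (j \<notin> B_inf \<longrightarrow> \<not> (?r k < ?r i \<and> ?r k < ?r j))"
  proof (cases "k = Suc n")
    case True
    have "?r k = p" using True by (simp add: insert_rank_def)
    moreover have "?r j < ?r i \<longleftrightarrow> r j < r i"
      using ijk True by (simp add: insert_rank_less_iff)
    ultimately show ?thesis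
      using insertableD[OF ins, of i j] ijk True old[of i] old[of j] \<open>n - f \<le> p\<close> by auto
  next
    case False
    then show ?thesis
      using rank_avoidsD[OF avoids, of i j k] ijk by (simp add: insert_rank_less_iff)
  qed
qed

lemma insertable_insert_rank:
  assumes ins: "insertable n f r" and r: "ranking n r" and "c \<le> f" "f \<le> n"
  shows "insertable (Suc n) (next_state (Suc n) f c) (insert_rank (Suc n) (n - c) r)"
  unfolding insertable_def
proof (intro allI impI)
  fix i j assume ij: "1 \<le> i" "i < j" "j \<le> Suc n"
  let ?r = "insert_rank (Suc n) (n - c) r" and ?f = "next_state (Suc n) f c"
  have "r i < n" using ranking_less[OF r] ij by simp
  then have ri: "?r i < Suc n" "c = 0 \<Longrightarrow> ?r i = r i"
    using ij by (auto simp: insert_rank_def)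
  show "(j \<in> B_inf \<and> ?r j < ?r i \<longrightarrow> ?r i < Suc n - ?f) \<and>
        (j \<notin> B_inf \<longrightarrow> ?r i < Suc n - ?f \<or> ?r j < Suc n - ?f)"
  proof (cases "j = Suc n")
    case True
    then have "?r j = n - c" by (simp add: insert_rank_def)
    then show ?thesis
      using True ri \<open>r i < n\<close> \<open>c \<le> f\<close> \<open>f \<le> n\<close> by (auto simp: next_state_def)
  next
    case False
    have old: "?r x < Suc n - ?f" if "x \<le> n" "r x < n - f" for x
      using that \<open>c \<le> f\<close> next_state_le[OF \<open>c \<le> f\<close>, of "Suc n"]
      by (simp add: insert_rank_below)
    have "?r j < ?r i \<longleftrightarrow> r j < r i"
      using ij False by (simp add: insert_rank_less_iff)
    then show ?thesis
      using insertableD[OF ins, of i j] ij False old[of i] old[of j] by auto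
  qed
qed

lemma admissible_rank_invariant:
  assumes "admissible cs"
  shows "ranking (length cs + 1) (rank cs) \<and> rank_avoids B_inf (length cs + 1) (rank cs) \<and>
    insertable (length cs + 1) (state cs) (rank cs)"
  using assms
proof (induction cs)
  case Nil
  then show ?case by (simp add: ranking_def rank_avoids_def insertable_def)
next
  case (Cons c cs)
  define n where "n = length cs + 1"
  have IH: "ranking n (rank cs)" "rank_avoids B_inf n (rank cs)" "insertable n (state cs) (rank cs)"
    using Cons n_def by auto
  have c: "c \<le> state cs" "state cs \<le> n"
    using Cons state_le n_def by auto
  have eqs: "length (c # cs) + 1 = Suc n" "rank (c # cs) = insert_rank (Suc n) (n - c) (rank cs)"
    "state (c # cs) = next_state (Suc n) (state cs) c"
    by (simp_all add: n_def)
  show ?case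
    unfolding eqs
    using ranking_insert_rank[OF IH(1)] rank_avoids_insert_rank[OF IH(2,3)]
      insertable_insert_rank[OF IH(3,1) c] c by simp
qed

lemma admissible_rank_inj:
  "admissible cs \<Longrightarrow> admissible ds \<Longrightarrow> length cs = length ds \<Longrightarrow>
   (\<And>x. x \<in> {1..length cs + 1} \<Longrightarrow> rank cs x = rank ds x) \<Longrightarrow> cs = ds"
proof (induction cs arbitrary: ds)
  case Nil
  then show ?case by simp
next
  case (Cons c cs)
  then obtain d ds' where ds: "ds = d # ds'" by (cases ds) auto
  define n where "n = length cs + 1"
  have len: "length ds' = length cs" and adm: "admissible cs" "admissible ds'"
    using Cons.prems ds by auto
  have "c \<le> n" "d \<le> n"
    using Cons.prems ds state_le[OF adm(1)] state_le[OF adm(2)] len n_def by auto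
  have eq: "insert_rank (Suc n) (n - c) (rank cs) x = insert_rank (Suc n) (n - d) (rank ds') x"
    if "x \<in> {1..Suc n}" for x
    using Cons.prems(4)[of x] that ds len by (simp add: n_def)
  from eq[of "Suc n"] have "c = d"
    using \<open>c \<le> n\<close> \<open>d \<le> n\<close> by (simp add: insert_rank_def)
  have "rank cs x = rank ds' x" if "x \<in> {1..length cs + 1}" for x
    using eq[of x] that \<open>c = d\<close> insert_rank_cancel[of x "Suc n"] by (simp add: n_def)
  then have "cs = ds'" using Cons.IH adm len by simp
  then show ?case using ds \<open>c = d\<close> by simp
qed

lemma finite_choices: "finite (choices m)"
proof (rule finite_subset)
  have "set cs \<subseteq> {..length cs}" if "admissible cs" for cs
    using that by (induction cs) (auto dest: state_le)
  then show "choices m \<subseteq> {cs. set cs \<subseteq> {..m} \<and> length cs = m}"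
    by (auto simp: choices_def)
  show "finite {cs. set cs \<subseteq> {..m} \<and> length cs = m}"
    by (rule finite_lists_length_eq) simp
qed

lemma card_choices_le_card_D_X: "card (choices m) \<le> card (D_X (m + 2) (B (m + 2)))"
proof -
  let ?ord = "\<lambda>cs. order_of_rank (m + 2) (rank (0 # cs))"
  have props: "ranking (m + 2) (rank (0 # cs))" "rank_avoids B_inf (m + 2) (rank (0 # cs))"
    if "cs \<in> choices m" for cs
    using admissible_rank_invariant[of "0 # cs"] that by (auto simp: choices_def)
  have "?ord cs \<in> D_X (m + 2) (B (m + 2))" if cs: "cs \<in> choices m" for cs
  proof -
    \<comment> \<open>m + 2 is put on top, so the one place m + 1 where B (m + 2) may differ from B_inf
      cannot complete a forbidden triple\<close>
    have "rank (0 # cs) x < rank (0 # cs) (m + 2)" if "x \<in> {1..<m + 2}" for x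
      using ranking_less[OF props(1)[OF cs], of x] that cs
      by (auto simp: choices_def insert_rank_def)
    then have "rank_avoids (B (m + 2)) (m + 2) (rank (0 # cs))"
      using rank_avoids_top[OF props(2)[OF cs] B_subset_B_inf B_inf_below_subset_B] by blast
    then show ?thesis
      using order_of_rank_in_D_X props(1)[OF cs] by (simp add: ranking_def)
  qed
  moreover have "inj_on ?ord (choices m)"
  proof (rule inj_onI)
    fix cs ds assume cs: "cs \<in> choices m" and ds: "ds \<in> choices m" and "?ord cs = ?ord ds"
    then have "rank (0 # cs) x = rank (0 # ds) x" if "x \<in> {1..m + 2}" for x
      using ranking_eq_if_order_of_rank_eq[OF props(1)[OF cs] props(1)[OF ds]] that by blast
    then have "0 # cs = 0 # ds"
      using cs ds by (intro admissible_rank_inj) (auto simp: choices_def)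
    then show "cs = ds" by simp
  qed
  ultimately show ?thesis
    using card_inj_on_le finite_D_X by (metis image_subsetI)
qed

lemma card_choices_le_Suc: "card (choices m) \<le> card (choices (Suc m))"
proof (rule card_inj_on_le)
  show "inj_on (Cons 0) (choices m)" by simp
  show "Cons 0 ` choices m \<subseteq> choices (Suc m)" by (auto simp: choices_def)
qed (rule finite_choices)

section \<open>Counting insertion sequences by their state\<close>

lemma choices_Suc: "choices (Suc m) = (\<lambda>(cs, c). c # cs) ` (SIGMA cs:choices m. {..state cs})"
proof (intro equalityI subsetI)
  fix ds assume "ds \<in> choices (Suc m)"
  then obtain c cs where "ds = c # cs" "cs \<in> choices m" "c \<le> state cs"
    by (cases ds) (auto simp: choices_def)
  then show "ds \<in> (\<lambda>(cs, c). c # cs) ` (SIGMA cs:choices m. {..state cs})" by force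
qed (auto simp: choices_def)

lemma sum_choices_Suc:
  "(\<Sum>ds\<in>choices (Suc m). \<phi> ds) = (\<Sum>cs\<in>choices m. \<Sum>c\<le>state cs. \<phi> (c # cs))"
proof -
  have "inj_on (\<lambda>(cs, c). c # cs) (SIGMA cs:choices m. {..state cs})"
    by (auto simp: inj_on_def)
  then have "(\<Sum>ds\<in>choices (Suc m). \<phi> ds) =
      (\<Sum>(cs, c)\<in>(SIGMA cs:choices m. {..state cs}). \<phi> (c # cs))"
    unfolding choices_Suc by (simp add: sum.reindex case_prod_beta')
  also have "\<dots> = (\<Sum>cs\<in>choices m. \<Sum>c\<le>state cs. \<phi> (c # cs))"
    by (rule sum.Sigma[symmetric]) (auto simp: finite_choices)
  finally show ?thesis .
qed

lemma sum_state_choices_Suc: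
  "(\<Sum>ds\<in>choices (Suc m). \<phi> (state ds)) =
     (\<Sum>cs\<in>choices m. \<Sum>c\<le>state cs. \<phi> (next_state (m + 2) (state cs) c))"
  unfolding sum_choices_Suc by (intro sum.cong) (auto simp: choices_def)

lemma sum_next_state_B_inf:
  fixes \<phi> :: "nat \<Rightarrow> 'a::semiring_1"
  assumes "k \<in> B_inf"
  shows "(\<Sum>c\<le>f. \<phi> (next_state k f c)) = \<phi> (Suc f) + of_nat f * \<phi> 0"
  using assms by (simp add: atMost_atLeast0 sum.atLeast_Suc_atMost next_state_def)

lemma sum_next_state_not_B_inf:
  fixes \<phi> :: "nat \<Rightarrow> 'a::semiring_1"
  assumes "k \<notin> B_inf"
  shows "(\<Sum>c\<le>f. \<phi> (next_state k f c)) = \<phi> 1 + (\<Sum>c=1..f. \<phi> c)"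
  using assms by (simp add: atMost_atLeast0 sum.atLeast_Suc_atMost next_state_def)

(* Two consecutive insertion steps, the first at a position in B_inf and the second outside
   it, act on functions of the state by this operator (sum_state_choices_Suc_Suc). *)

definition transfer :: "(nat \<Rightarrow> real) \<Rightarrow> nat \<Rightarrow> real" where
  "transfer \<phi> f = real (Suc f) * \<phi> 1 + (\<Sum>c=1..Suc f. \<phi> c)"

lemma sum_state_choices_Suc_Suc:
  assumes "odd m"
  shows "(\<Sum>ds\<in>choices (Suc (Suc m)). \<phi> (state ds)) = (\<Sum>cs\<in>choices m. transfer \<phi> (state cs))"
proof -
  have B: "m + 2 \<in> B_inf" and not_B: "Suc m + 2 \<notin> B_inf"
    using assms by (auto simp: B_inf_def)
  define \<psi> where "\<psi> g = \<phi> 1 + (\<Sum>c=1..g. \<phi> c)" for g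
  have "(\<Sum>ds\<in>choices (Suc (Suc m)). \<phi> (state ds)) = (\<Sum>ds\<in>choices (Suc m). \<psi> (state ds))"
    unfolding sum_state_choices_Suc[where m = "Suc m"] \<psi>_def
    using not_B by (simp add: sum_next_state_not_B_inf)
  also have "\<dots> = (\<Sum>cs\<in>choices m. \<Sum>c\<le>state cs. \<psi> (next_state (m + 2) (state cs) c))"
    by (rule sum_state_choices_Suc)
  also have "\<dots> = (\<Sum>cs\<in>choices m. transfer \<phi> (state cs))"
    unfolding sum_next_state_B_inf[OF B]
    by (simp add: \<psi>_def transfer_def sum.cl_ivl_Suc algebra_simps)
  finally show ?thesis .
qed

definition state_count :: "nat \<Rightarrow> nat \<Rightarrow> nat" where
  "state_count m g = card {cs \<in> choices m. state cs = g}"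

lemma sum_choices_by_state:
  "(\<Sum>cs\<in>choices m. \<phi> (state cs)) = (\<Sum>g\<le>Suc m. \<phi> g * real (state_count m g))"
proof -
  have "(\<Sum>cs\<in>choices m. \<phi> (state cs)) =
      (\<Sum>g\<le>Suc m. \<Sum>cs\<in>{cs \<in> choices m. state cs = g}. \<phi> (state cs))"
    using state_le by (intro sum.group[symmetric] finite_choices) (auto simp: choices_def)
  also have "\<dots> = (\<Sum>g\<le>Suc m. \<phi> g * real (state_count m g))"
    unfolding state_count_def by (intro sum.cong) auto
  finally show ?thesis .
qed

lemma card_choices_eq_sum: "real (card (choices m)) = (\<Sum>g\<le>Suc m. real (state_count m g))"
  using sum_choices_by_state[of "\<lambda>_. 1" m] by simp

lemma state_count_Suc_Suc:
  assumes "odd m"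
  shows "real (state_count (Suc (Suc m)) g) =
    (\<Sum>f\<le>Suc m. transfer (\<lambda>s. of_bool (s = g)) f * real (state_count m f))"
proof -
  have "real (state_count (Suc (Suc m)) g) = (\<Sum>ds\<in>choices (Suc (Suc m)). of_bool (state ds = g))"
    unfolding state_count_def by (simp add: finite_choices Int_def)
  also have "\<dots> = (\<Sum>cs\<in>choices m. transfer (\<lambda>s. of_bool (s = g)) (state cs))"
    by (rule sum_state_choices_Suc_Suc[OF assms])
  also have "\<dots> = (\<Sum>f\<le>Suc m. transfer (\<lambda>s. of_bool (s = g)) f * real (state_count m f))"
    by (rule sum_choices_by_state)
  finally show ?thesis .
qed

lemma state_count_zero:
  assumes "odd m" "3 \<le> m"
  shows "state_count m 0 = 0"
proof -
  have "state cs \<noteq> 0" if cs: "cs \<in> choices m" for cs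
  proof -
    obtain c cs' where "cs = c # cs'" "length cs' + 2 = m + 1"
      using cs assms by (cases cs) (auto simp: choices_def)
    moreover have "m + 1 \<notin> B_inf" using assms by (auto simp: B_inf_def)
    ultimately show ?thesis by (simp add: next_state_def)
  qed
  then have "{cs \<in> choices m. state cs = 0} = {}" by blast
  then show ?thesis by (simp only: state_count_def card.empty)
qed

lemma transfer_nonneg: "(\<And>s. 0 \<le> \<phi> s) \<Longrightarrow> 0 \<le> transfer \<phi> f"
  by (simp add: transfer_def sum_nonneg)

lemma transfer_indicator:
  "transfer (\<lambda>s. of_bool (s = g)) f = real (Suc f) * of_bool (g = 1) + of_bool (g \<in> {1..Suc f})"
  by (simp add: transfer_def of_bool_def sum.delta)

section \<open>Growth rate\<close>

lemma sum_power_tail_le: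
  fixes x :: real
  assumes "0 \<le> x" "x < 1"
  shows "(\<Sum>i=m..n. x ^ i) \<le> x ^ m / (1 - x)"
proof (cases "m \<le> n")
  case True
  have "(1 - x) * (\<Sum>i=m..n. x ^ i) \<le> x ^ m"
    using sum_gp_multiplied[OF True, of x] assms by simp
  then show ?thesis using assms by (simp add: field_simps mult.commute)
qed (use assms in simp)

lemma sum_linear_power_le:
  fixes x a :: real
  assumes "0 \<le> x" "x < 1" "0 \<le> a"
  shows "(\<Sum>t\<le>L. (real t + a) * x ^ t) \<le> 1 / (1 - x)^2 + (a - 1) / (1 - x)"
proof -
  have "(\<lambda>t. real (Suc t) * x ^ t + (a - 1) * x ^ t) sums (1 / (1 - x)^2 + (a - 1) * (1 / (1 - x)))"
    using assms by (intro sums_add sums_mult geometric_deriv_sums geometric_sums) auto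
  then have sums: "(\<lambda>t. (real t + a) * x ^ t) sums (1 / (1 - x)^2 + (a - 1) / (1 - x))"
    by (simp add: algebra_simps)
  have "(\<Sum>t\<le>L. (real t + a) * x ^ t) \<le> (\<Sum>t. (real t + a) * x ^ t)"
    using sums assms by (intro sum_le_suminf) (auto simp: sums_iff)
  then show ?thesis
    using sums by (simp add: sums_iff)
qed

definition mu :: real where "mu = 2 + 2 * sqrt 2"

definition rho :: real where "rho = 1 - sqrt 2 / 2"

lemma sqrt_2_less_2: "sqrt 2 < 2"
  by (simp add: real_sqrt_less_iff[of 2 4, simplified])

lemma rho_pos: "0 < rho"
  using sqrt_2_less_2 by (simp add: rho_def)

lemma rho_less_1: "rho < 1"
  by (simp add: rho_def)

lemma mu_pos: "0 < mu"
  unfolding mu_def by (simp add: add_pos_nonneg)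

lemma mu_mult_rho: "mu * rho = sqrt 2"
  by (simp add: mu_def rho_def algebra_simps)

lemma inverse_1_minus_rho: "1 / (1 - rho) = sqrt 2"
  by (simp add: rho_def field_simps)

lemma sqrt_2_mult_rho: "sqrt 2 * rho = sqrt 2 - 1"
  by (simp add: rho_def algebra_simps)

lemma rho_series_sum: "1 / (1 - rho)^2 + 2 / (1 - rho) = mu"
proof -
  have "1 / (1 - rho)^2 + 2 / (1 - rho) = (1 / (1 - rho))^2 + 2 * (1 / (1 - rho))"
    by (simp add: power_one_over)
  then show ?thesis using inverse_1_minus_rho by (simp add: mu_def)
qed

definition weight :: "nat \<Rightarrow> real" where
  "weight t = sqrt 2 ^ Suc t - 1"

lemma weight_pos: "0 < weight t"
  unfolding weight_def using one_less_power[of "sqrt 2" "Suc t"] by simp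

lemma transfer_weight: "transfer weight f = mu * weight f"
proof -
  have "(1 - sqrt 2) * (\<Sum>c=1..Suc f. sqrt 2 ^ Suc c) =
      sqrt 2 * ((1 - sqrt 2) * (\<Sum>c=1..Suc f. sqrt 2 ^ c))"
    by (simp add: sum_distrib_left algebra_simps)
  also have "\<dots> = sqrt 2 * (sqrt 2 - sqrt 2 ^ Suc (Suc f))"
    using sum_gp_multiplied[of 1 "Suc f" "sqrt 2"] by simp
  also have "\<dots> = (1 - sqrt 2) * (mu * weight f)"
    by (simp add: mu_def weight_def algebra_simps)
  finally have "(\<Sum>c=1..Suc f. sqrt 2 ^ Suc c) = mu * weight f"
    by simp
  then show ?thesis
    by (simp add: transfer_def weight_def sum_subtractf)
qed

lemma sum_weight_choices:
  "(\<Sum>cs\<in>choices (3 + 2 * i). weight (state cs)) = mu ^ i * (\<Sum>cs\<in>choices 3. weight (state cs))"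
proof (induction i)
  case (Suc i)
  have "(\<Sum>cs\<in>choices (3 + 2 * Suc i). weight (state cs)) =
      (\<Sum>cs\<in>choices (3 + 2 * i). transfer weight (state cs))"
    using sum_state_choices_Suc_Suc[of "3 + 2 * i" weight] by simp
  then show ?case
    using Suc by (simp add: transfer_weight sum_distrib_left[symmetric])
qed simp

lemma sum_transfer_indicator_le:
  "(\<Sum>t\<le>L. transfer (\<lambda>s. of_bool (s = g)) (Suc t) * rho ^ Suc t) \<le> mu * rho ^ g"
proof -
  consider "g = 0" | "g = 1" | h where "g = h + 2"
    by (metis One_nat_def add_2_eq_Suc' not0_implies_Suc)
  then show ?thesis
  proof cases
    case 1
    then show ?thesis using mu_pos rho_pos by (simp add: transfer_indicator)
  next
    case 2
    have "(\<Sum>t\<le>L. transfer (\<lambda>s. of_bool (s = g)) (Suc t) * rho ^ Suc t) =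
        rho * (\<Sum>t\<le>L. (real t + 3) * rho ^ t)"
      using 2 by (simp add: transfer_indicator sum_distrib_left algebra_simps)
    also have "\<dots> \<le> rho * (1 / (1 - rho)^2 + (3 - 1) / (1 - rho))"
      using sum_linear_power_le[of rho 3 L] rho_pos rho_less_1 by (intro mult_left_mono) auto
    finally show ?thesis
      using 2 rho_series_sum by (simp add: mult.commute)
  next
    case 3
    have "(\<Sum>t\<le>L. transfer (\<lambda>s. of_bool (s = g)) (Suc t) * rho ^ Suc t) =
        (\<Sum>t\<le>L. if h \<le> t then rho * rho ^ t else 0)"
      using 3 by (intro sum.cong) (auto simp: transfer_indicator)
    also have "\<dots> = rho * (\<Sum>t=h..L. rho ^ t)"
      by (simp add: sum.If_cases sum_distrib_left Int_def atLeastAtMost_def atMost_def conj_commute)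
    also have "\<dots> \<le> rho * (rho ^ h / (1 - rho))"
      using rho_pos rho_less_1 by (intro mult_left_mono sum_power_tail_le) auto
    also have "\<dots> = mu * rho ^ g"
      using 3 inverse_1_minus_rho mu_mult_rho
      by (simp add: divide_inverse algebra_simps flip: inverse_eq_divide)
    finally show ?thesis .
  qed
qed

lemma state_count_3_le: "real (state_count 3 g) \<le> real (card (choices 3)) / rho ^ 4 * rho ^ g"
proof (cases "g \<le> 4")
  case True
  have "state_count 3 g \<le> card (choices 3)"
    unfolding state_count_def by (rule card_mono[OF finite_choices]) auto
  moreover have "rho ^ 4 \<le> rho ^ g"
    using True rho_pos rho_less_1 by (intro power_decreasing) auto
  ultimately have "real (state_count 3 g) * rho ^ 4 \<le> real (card (choices 3)) * rho ^ g"
    using rho_pos by (intro mult_mono) auto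
  then show ?thesis using rho_pos by (simp add: field_simps mult.commute)
next
  case False
  then have "{cs \<in> choices 3. state cs = g} = {}"
    using state_le by (fastforce simp: choices_def)
  then have "state_count 3 g = 0" by (simp only: state_count_def card.empty)
  then show ?thesis using rho_pos by simp
qed

lemma state_count_Suc_Suc_le:
  assumes m: "odd m" "3 \<le> m" and "0 \<le> C"
    and count: "\<And>f. real (state_count m f) \<le> C * rho ^ f"
  shows "real (state_count (Suc (Suc m)) g) \<le> C * mu * rho ^ g"
proof -
  let ?T = "\<lambda>f. transfer (\<lambda>s. of_bool (s = g)) f"
  have "real (state_count (Suc (Suc m)) g) = (\<Sum>f\<le>Suc m. ?T f * real (state_count m f))"
    by (rule state_count_Suc_Suc[OF m(1)])
  also have "\<dots> = (\<Sum>t\<le>m. ?T (Suc t) * real (state_count m (Suc t)))"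
    unfolding sum.atMost_Suc_shift using state_count_zero[OF m] by simp
  also have "\<dots> \<le> (\<Sum>t\<le>m. ?T (Suc t) * (C * rho ^ Suc t))"
    by (intro sum_mono mult_left_mono transfer_nonneg count) simp
  also have "\<dots> = C * (\<Sum>t\<le>m. ?T (Suc t) * rho ^ Suc t)"
    by (simp add: sum_distrib_left algebra_simps)
  also have "\<dots> \<le> C * (mu * rho ^ g)"
    using sum_transfer_indicator_le \<open>0 \<le> C\<close> by (rule mult_left_mono)
  finally show ?thesis by (simp add: algebra_simps)
qed

lemma state_count_le:
  "real (state_count (3 + 2 * i) g) \<le> real (card (choices 3)) / rho ^ 4 * mu ^ i * rho ^ g"
proof (induction i arbitrary: g)
  case 0
  then show ?case using state_count_3_le by simp
next
  case (Suc i)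
  have "0 \<le> real (card (choices 3)) / rho ^ 4 * mu ^ i"
    using rho_pos mu_pos by simp
  from state_count_Suc_Suc_le[of "3 + 2 * i", OF _ _ this Suc.IH]
  show ?case by (simp add: algebra_simps)
qed

lemma sum_weight_le:
  assumes "0 \<le> C" and count: "\<And>g. real (state_count m g) \<le> C * rho ^ g"
  shows "(\<Sum>cs\<in>choices m. weight (state cs)) \<le>
    sqrt 2 ^ Suc K * real (card (choices m)) + sqrt 2 * C * ((sqrt 2 - 1) ^ K / (2 - sqrt 2))"
proof -
  define \<theta> where "\<theta> = sqrt 2 - 1"
  have \<theta>: "0 < \<theta>" "\<theta> < 1" "\<theta> = sqrt 2 * rho" "1 - \<theta> = 2 - sqrt 2"
    using sqrt_2_less_2 sqrt_2_mult_rho by (simp_all add: \<theta>_def)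
  have split: "weight g * real (state_count m g) \<le>
      sqrt 2 ^ Suc K * real (state_count m g) + (if K \<le> g then sqrt 2 * C * \<theta> ^ g else 0)" for g
  proof (cases "K \<le> g")
    case True
    have "weight g * real (state_count m g) \<le> sqrt 2 ^ Suc g * (C * rho ^ g)"
      using count[of g] by (intro mult_mono) (auto simp: weight_def)
    also have "\<dots> = sqrt 2 * C * \<theta> ^ g"
      by (simp add: \<theta>(3) power_mult_distrib)
    finally show ?thesis using True by (simp add: add_increasing)
  next
    case False
    have "weight g \<le> sqrt 2 ^ Suc g" by (simp add: weight_def)
    also have "\<dots> \<le> sqrt 2 ^ Suc K" using False by (intro power_increasing) auto
    finally show ?thesis using False by (simp add: mult_right_mono)
  qed
  have tail: "(\<Sum>g\<le>Suc m. if K \<le> g then sqrt 2 * C * \<theta> ^ g else 0) =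
      sqrt 2 * C * (\<Sum>g=K..Suc m. \<theta> ^ g)"
  proof -
    have "{g \<in> {..Suc m}. K \<le> g} = {K..Suc m}" by auto
    then show ?thesis
      by (simp only: sum.inter_filter[OF finite_atMost, symmetric] sum_distrib_left)
  qed
  have "(\<Sum>cs\<in>choices m. weight (state cs)) = (\<Sum>g\<le>Suc m. weight g * real (state_count m g))"
    by (rule sum_choices_by_state)
  also have "\<dots> \<le> (\<Sum>g\<le>Suc m. sqrt 2 ^ Suc K * real (state_count m g) +
      (if K \<le> g then sqrt 2 * C * \<theta> ^ g else 0))"
    by (rule sum_mono) (rule split)
  also have "\<dots> = sqrt 2 ^ Suc K * real (card (choices m)) + sqrt 2 * C * (\<Sum>g=K..Suc m. \<theta> ^ g)"
    by (simp only: sum.distrib tail card_choices_eq_sum sum_distrib_left)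
  also have "\<dots> \<le> sqrt 2 ^ Suc K * real (card (choices m)) + sqrt 2 * C * (\<theta> ^ K / (1 - \<theta>))"
    using \<theta>(1,2) \<open>0 \<le> C\<close> by (intro add_left_mono mult_left_mono sum_power_tail_le) auto
  finally show ?thesis by (simp add: \<theta>_def)
qed

lemma card_choices_lower_bound:
  obtains c where "0 < c" "\<And>i. c * mu ^ i \<le> real (card (choices (3 + 2 * i)))"
proof -
  define W where "W = (\<Sum>cs\<in>choices 3. weight (state cs))"
  define C where "C = real (card (choices 3)) / rho ^ 4"
  have "replicate 3 0 \<in> choices 3" by (simp add: choices_def numeral_eq_Suc)
  then have "0 < W"
    unfolding W_def using weight_pos finite_choices by (intro sum_pos) auto
  have "0 \<le> C" using rho_pos by (simp add: C_def)
  have "(\<lambda>K. sqrt 2 * C * ((sqrt 2 - 1) ^ K / (2 - sqrt 2))) \<longlonglongrightarrow> 0"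
    using sqrt_2_less_2
    by (intro tendsto_mult_right_zero tendsto_divide_zero LIMSEQ_power_zero) auto
  then have "eventually (\<lambda>K. sqrt 2 * C * ((sqrt 2 - 1) ^ K / (2 - sqrt 2)) < W / 2) sequentially"
    using \<open>0 < W\<close> by (intro order_tendstoD(2)) auto
  then obtain K where K: "sqrt 2 * C * ((sqrt 2 - 1) ^ K / (2 - sqrt 2)) < W / 2"
    unfolding eventually_sequentially by blast
  have "W / (2 * sqrt 2 ^ Suc K) * mu ^ i \<le> real (card (choices (3 + 2 * i)))" for i
  proof -
    have count: "real (state_count (3 + 2 * i) g) \<le> C * mu ^ i * rho ^ g" for g
      using state_count_le by (simp add: C_def)
    have "0 \<le> C * mu ^ i" using \<open>0 \<le> C\<close> mu_pos by simp
    have "mu ^ i * W = (\<Sum>cs\<in>choices (3 + 2 * i). weight (state cs))"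
      by (simp add: sum_weight_choices W_def)
    also have "\<dots> \<le> sqrt 2 ^ Suc K * real (card (choices (3 + 2 * i))) +
        sqrt 2 * (C * mu ^ i) * ((sqrt 2 - 1) ^ K / (2 - sqrt 2))"
      using sum_weight_le[OF \<open>0 \<le> C * mu ^ i\<close>] count by (simp add: mult.assoc)
    also have "\<dots> = sqrt 2 ^ Suc K * real (card (choices (3 + 2 * i))) +
        mu ^ i * (sqrt 2 * C * ((sqrt 2 - 1) ^ K / (2 - sqrt 2)))"
      by (simp add: algebra_simps)
    also have "\<dots> \<le> sqrt 2 ^ Suc K * real (card (choices (3 + 2 * i))) + mu ^ i * (W / 2)"
      using K mu_pos by (intro add_left_mono mult_left_mono) auto
    finally show ?thesis by (simp add: field_simps)
  qed
  then show ?thesis using \<open>0 < W\<close> by (intro that[of "W / (2 * sqrt 2 ^ Suc K)"]) auto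
qed

theorem proposition12:
  shows "\<exists>C::real. C > 0 \<and> (\<exists>N. \<forall>n\<ge>N.
           real (card (D_X n (B n))) \<ge> C * (sqrt (2 + 2 * sqrt 2)) ^ n)"
proof -
  obtain c where "0 < c" and c: "\<And>i. c * mu ^ i \<le> real (card (choices (3 + 2 * i)))"
    using card_choices_lower_bound by blast
  define base where "base = sqrt (2 + 2 * sqrt 2)"
  have base: "base ^ 2 = mu" "1 \<le> base" by (simp_all add: base_def mu_def)
  have "c / base ^ 6 * base ^ n \<le> real (card (D_X n (B n)))" if "5 \<le> n" for n
  proof -
    define i where "i = (n - 5) div 2"
    have "c / base ^ 6 * base ^ n \<le> c / base ^ 6 * base ^ (6 + 2 * i)"
      using \<open>0 < c\<close> base by (intro mult_left_mono power_increasing) (auto simp: i_def)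
    also have "\<dots> = c * mu ^ i"
      using base by (simp add: power_add power_mult)
    also have "\<dots> \<le> real (card (choices (3 + 2 * i)))" by (rule c)
    also have "\<dots> \<le> real (card (choices (n - 2)))"
      using lift_Suc_mono_le[of "\<lambda>m. card (choices m)", OF card_choices_le_Suc,
          of "3 + 2 * i" "n - 2"] that
      by (simp add: i_def)
    also have "\<dots> \<le> real (card (D_X n (B n)))"
    proof -
      have "n - 2 + 2 = n" using that by simp
      then show ?thesis by (metis card_choices_le_card_D_X of_nat_le_iff)
    qed
    finally show ?thesis .
  qed
  moreover have "0 < c / base ^ 6" using \<open>0 < c\<close> base by simp
  ultimately show ?thesis
    unfolding base_def[symmetric] by (intro exI[of _ "c / base ^ 6"] conjI exI[of _ 5]) auto
qed

end
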